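(* Let $P$ be a correct net. (1) Free weakening: if $P$ has a free weakening $l$ then $\mathcal L(P) \setminus \{l\}$ is a subnet of $P$. (2) Root abstraction: if the root link $l$ of $P$ is a ⅋-link (par-link) then $\mathcal L(P) \setminus \{l\}$ is a subnet of $P$. (3) Free substitution: if $P$ has a free substitution $l$ then $\mathcal L(P) \setminus (\{l\} \cup \mathrm{ibox}(l))$ is a subnet of $P$. (4) Root application with free argument: if the root link $l$ of $P$ is a $\otimes$-link whose argument is a free $!$-link $h$ then $\mathcal L(P) \setminus (\{l,h\} \cup \mathrm{ibox}(h))$ is a subnet of $P$.
   Context: Nets are directed labelled hyper-graphs with nodes typed ${\mathtt e}$ (exponential) or ${\mathtt m}$ (multiplicative) and links labelled by $!$, ${\mathsf d}$ (dereliction), ${\mathsf w}$ (weakening), ⅋ (par), $\otimes$, $[\cdot]$ (context hole), ${\tt genax}$; $\mathcal L(P)$ denotes the set of links of $P$. Contraction is represented by an ${\mathtt e}$-node with several incoming ${\mathsf d}$-links. The root of $P$ is its unique terminal ${\mathtt m}$-node and the root link is the link whose target is the root; the free variables of $P$ are its terminal ${\mathtt e}$-nodes. Each $!$-link $l$ has a box with interior $\mathrm{ibox}(l)$ (a set of links not containing $l$, itself a (pre-)net whose root is the ${\mathtt m}$-source of $l$; its free variables are not targets of weakenings). A net is correct if the root is the only terminal ${\mathtt m}$-node of its correction net (obtained by collapsing each level-0 box into a ${\tt genax}$-link with the same interface), the correction net is acyclic, and the boxes at level 0 are correct. A free weakening is a weakening whose ${\mathtt e}$-node is a free variable of $P$.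 A $!$-link $l$ is free if it is at level 0 (not inside any box) and its free variables (those of its box) are free variables of $P$; it is an argument if its ${\mathtt e}$-node is the target of a $\otimes$-link; it is a substitution if its ${\mathtt e}$-node is the target of a ${\mathsf w}$-, ${\mathsf d}$- or $[\cdot]$-link. A subnet $Q$ of a correct net $P$ is a subset of its links that is a correct net (with the box function inherited from $P$) and is closed under: contractions (every link of $P$ whose target is an internal ${\mathtt e}$-node of $Q$ is in $Q$); box interiors ($\mathrm{ibox}(h) \subseteq Q$ for every $!$-link $h \in Q$); box free variables ($\mathrm{ibox}(l) \subseteq Q$ whenever a free variable of $\mathrm{ibox}(l)$ is internal to $Q$). *)

theory Defs
  imports Main
begin

text \<open>Node types: exponential (e) and multiplicative (m).\<close>
datatype ntype = Ety | Mty

datatype label = Bang | Der | Weak | Par | Tens | Hole | Genax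

text \<open>A (pre-)net is a set of links of this structure; sub-(pre)nets inherit
  everything, in particular the box function.\<close>
record ('n, 'l) hg =
  ntyp  :: "'n \<Rightarrow> ntype"
  lab  :: "'l \<Rightarrow> label"
  src  :: "'l \<Rightarrow> 'n list"
  tgt  :: "'l \<Rightarrow> 'n list"
  ibox :: "'l \<Rightarrow> 'l set"

definition nodes :: "('n,'l) hg \<Rightarrow> 'l set \<Rightarrow> 'n set" where
  "nodes G S = (\<Union>l\<in>S. set (src G l) \<union> set (tgt G l))"

definition sources :: "('n,'l) hg \<Rightarrow> 'l set \<Rightarrow> 'n set" where
  "sources G S = (\<Union>l\<in>S. set (src G l))"

definition terminal :: "('n,'l) hg \<Rightarrow> 'l set \<Rightarrow> 'n set" where
  "terminal G S = nodes G S - sources G S"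

definition internal :: "('n,'l) hg \<Rightarrow> 'l set \<Rightarrow> 'n set" where
  "internal G S = nodes G S - terminal G S"

definition fv :: "('n,'l) hg \<Rightarrow> 'l set \<Rightarrow> 'n set" where
  "fv G S = {v \<in> terminal G S. ntyp G v = Ety}"

definition term_m :: "('n,'l) hg \<Rightarrow> 'l set \<Rightarrow> 'n set" where
  "term_m G S = {v \<in> terminal G S. ntyp G v = Mty}"

definition root :: "('n,'l) hg \<Rightarrow> 'l set \<Rightarrow> 'n" where
  "root G S = (THE v. v \<in> term_m G S)"

text \<open>Signature of each label (sources, targets).
  par: sources [x (e, bound variable), b (m, body)], target [r (m)];
  tensor: source [f (m, function)], targets [r (m, result), a (e, argument)];
  d: no source, targets [r (m, occurrence), x (e, variable)];
  w: no source, target [x (e)];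
  !: sources [r (m, box root), x (e)], no target;
  hole: no source, targets r (m) followed by e-nodes;
  genax: e-nodes only.\<close>
fun sig_ok :: "('n \<Rightarrow> ntype) \<Rightarrow> label \<Rightarrow> 'n list \<Rightarrow> 'n list \<Rightarrow> bool" where
  "sig_ok ty Par s t = (\<exists>x b r. s = [x, b] \<and> t = [r] \<and> ty x = Ety \<and> ty b = Mty \<and> ty r = Mty)"
| "sig_ok ty Tens s t = (\<exists>f r a. s = [f] \<and> t = [r, a] \<and> ty f = Mty \<and> ty r = Mty \<and> ty a = Ety)"
| "sig_ok ty Der s t = (\<exists>r x. s = [] \<and> t = [r, x] \<and> ty r = Mty \<and> ty x = Ety)"
| "sig_ok ty Weak s t = (\<exists>x. s = [] \<and> t = [x] \<and> ty x = Ety)"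
| "sig_ok ty Bang s t = (\<exists>r x. s = [r, x] \<and> t = [] \<and> ty r = Mty \<and> ty x = Ety)"
| "sig_ok ty Hole s t = (\<exists>r xs. s = [] \<and> t = r # xs \<and> ty r = Mty \<and> (\<forall>x\<in>set xs. ty x = Ety))"
| "sig_ok ty Genax s t = ((\<forall>x\<in>set s. ty x = Ety) \<and> (\<forall>x\<in>set t. ty x = Ety))"

definition link_ok :: "('n,'l) hg \<Rightarrow> 'l \<Rightarrow> bool" where
  "link_ok G l = (sig_ok (ntyp G) (lab G l) (src G l) (tgt G l) \<and> distinct (src G l @ tgt G l))"

definition bang_root :: "('n,'l) hg \<Rightarrow> 'l \<Rightarrow> 'n" where
  "bang_root G l = src G l ! 0"
definition bang_enode :: "('n,'l) hg \<Rightarrow> 'l \<Rightarrow> 'n" where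
  "bang_enode G l = src G l ! 1"
definition weak_enode :: "('n,'l) hg \<Rightarrow> 'l \<Rightarrow> 'n" where
  "weak_enode G l = tgt G l ! 0"
definition tens_enode :: "('n,'l) hg \<Rightarrow> 'l \<Rightarrow> 'n" where
  "tens_enode G l = tgt G l ! 1"

text \<open>Hyper-graph well-formedness of a link set (ignoring boxes):
  every node is the target of some link; every node is the source of at
  most one link; every m-node is the target of exactly one link (contraction
  only on e-nodes); there is a unique terminal m-node (the root).\<close>
definition hg_ok :: "('n,'l) hg \<Rightarrow> 'l set \<Rightarrow> bool" where
  "hg_ok G S =
    (finite S \<and> (\<forall>l\<in>S. link_ok G l) \<and>
     (\<forall>v\<in>nodes G S. \<exists>l\<in>S. v \<in> set (tgt G l)) \<and>
     (\<forall>v l1 l2. l1 \<in> S \<longrightarrow> l2 \<in> S \<longrightarrow> v \<in> set (src G l1) \<longrightarrow> v \<in> set (src G l2) \<longrightarrow> l1 = l2) \<and>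
     (\<forall>v l1 l2. ntyp G v = Mty \<longrightarrow> l1 \<in> S \<longrightarrow> l2 \<in> S \<longrightarrow> v \<in> set (tgt G l1) \<longrightarrow> v \<in> set (tgt G l2) \<longrightarrow> l1 = l2) \<and>
     (\<exists>!v. v \<in> term_m G S))"

definition boxes_nested :: "('n,'l) hg \<Rightarrow> 'l set \<Rightarrow> bool" where
  "boxes_nested G S =
    (\<forall>l\<in>S. \<forall>h\<in>S. lab G l = Bang \<longrightarrow> lab G h = Bang \<longrightarrow>
        (h \<in> ibox G l \<longrightarrow> ibox G h \<subseteq> ibox G l) \<and>
        (ibox G l \<inter> ibox G h \<noteq> {} \<longrightarrow> l = h \<or> l \<in> ibox G h \<or> h \<in> ibox G l))"

inductive prenet :: "('n,'l) hg \<Rightarrow> 'l set \<Rightarrow> bool" for G where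
  "hg_ok G S \<Longrightarrow> boxes_nested G S \<Longrightarrow>
   (\<forall>l\<in>S. lab G l = Bang \<longrightarrow>
      ibox G l \<subseteq> S \<and> l \<notin> ibox G l \<and> prenet G (ibox G l) \<and>
      root G (ibox G l) = bang_root G l \<and>
      (\<forall>w\<in>ibox G l. lab G w = Weak \<longrightarrow> set (tgt G w) \<inter> fv G (ibox G l) = {})) \<Longrightarrow>
   prenet G S"

definition level0 :: "('n,'l) hg \<Rightarrow> 'l set \<Rightarrow> 'l \<Rightarrow> bool" where
  "level0 G S k = (k \<in> S \<and> (\<forall>l\<in>S. lab G l = Bang \<longrightarrow> k \<notin> ibox G l))"

text \<open>The correction net: level-0 links that are not !-links, plus, for each
  level-0 !-link l, a genax-link (replacing l and its box) with the same
  interface: source the e-node of l, targets the free variables of the box.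
  It is represented by its nodes, its source nodes, and the induced
  node-to-node directed edges (source to target of each link).\<close>
definition corr_edges :: "('n,'l) hg \<Rightarrow> 'l set \<Rightarrow> ('n \<times> 'n) set" where
  "corr_edges G S =
     {(u, v). \<exists>k. level0 G S k \<and> lab G k \<noteq> Bang \<and> u \<in> set (src G k) \<and> v \<in> set (tgt G k)} \<union>
     {(u, v). \<exists>l. level0 G S l \<and> lab G l = Bang \<and> u = bang_enode G l \<and> v \<in> fv G (ibox G l)}"

definition corr_nodes :: "('n,'l) hg \<Rightarrow> 'l set \<Rightarrow> 'n set" where
  "corr_nodes G S =
     (\<Union>k\<in>{k. level0 G S k \<and> lab G k \<noteq> Bang}. set (src G k) \<union> set (tgt G k)) \<union>
     (\<Union>l\<in>{l. level0 G S l \<and> lab G l = Bang}. insert (bang_enode G l) (fv G (ibox G l)))"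

definition corr_sources :: "('n,'l) hg \<Rightarrow> 'l set \<Rightarrow> 'n set" where
  "corr_sources G S =
     (\<Union>k\<in>{k. level0 G S k \<and> lab G k \<noteq> Bang}. set (src G k)) \<union>
     {bang_enode G l | l. level0 G S l \<and> lab G l = Bang}"

definition corr_term_m :: "('n,'l) hg \<Rightarrow> 'l set \<Rightarrow> 'n set" where
  "corr_term_m G S = {v \<in> corr_nodes G S - corr_sources G S. ntyp G v = Mty}"

inductive correct :: "('n,'l) hg \<Rightarrow> 'l set \<Rightarrow> bool" for G where
  "prenet G S \<Longrightarrow> corr_term_m G S = {root G S} \<Longrightarrow> acyclic (corr_edges G S) \<Longrightarrow>
   (\<forall>l. level0 G S l \<and> lab G l = Bang \<longrightarrow> correct G (ibox G l)) \<Longrightarrow>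
   correct G S"

definition subnet :: "('n,'l) hg \<Rightarrow> 'l set \<Rightarrow> 'l set \<Rightarrow> bool" where
  "subnet G Q P =
    (Q \<subseteq> P \<and> correct G Q \<and>
     (\<forall>l\<in>P. \<forall>v\<in>set (tgt G l). v \<in> internal G Q \<and> ntyp G v = Ety \<longrightarrow> l \<in> Q) \<and>
     (\<forall>h\<in>Q. lab G h = Bang \<longrightarrow> ibox G h \<subseteq> Q) \<and>
     (\<forall>l\<in>P. lab G l = Bang \<and> fv G (ibox G l) \<inter> internal G Q \<noteq> {} \<longrightarrow> ibox G l \<subseteq> Q))"

definition free_weakening :: "('n,'l) hg \<Rightarrow> 'l set \<Rightarrow> 'l \<Rightarrow> bool" where
  "free_weakening G P l = (l \<in> P \<and> lab G l = Weak \<and> weak_enode G l \<in> fv G P)"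

definition free_bang :: "('n,'l) hg \<Rightarrow> 'l set \<Rightarrow> 'l \<Rightarrow> bool" where
  "free_bang G P l = (level0 G P l \<and> lab G l = Bang \<and> fv G (ibox G l) \<subseteq> fv G P)"

definition is_substitution :: "('n,'l) hg \<Rightarrow> 'l set \<Rightarrow> 'l \<Rightarrow> bool" where
  "is_substitution G P l = (l \<in> P \<and> lab G l = Bang \<and>
     (\<exists>k\<in>P. lab G k \<in> {Weak, Der, Hole} \<and> bang_enode G l \<in> set (tgt G k)))"

definition is_argument :: "('n,'l) hg \<Rightarrow> 'l set \<Rightarrow> 'l \<Rightarrow> bool" where
  "is_argument G P l = (l \<in> P \<and> lab G l = Bang \<and>
     (\<exists>k\<in>P. lab G k = Tens \<and> bang_enode G l \<in> set (tgt G k)))"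

definition root_link :: "('n,'l) hg \<Rightarrow> 'l set \<Rightarrow> 'l \<Rightarrow> bool" where
  "root_link G P l = (l \<in> P \<and> root G P \<in> set (tgt G l))"

end

theory Submission
  imports Defs
begin

text \<open>All four parts R are removed by one criterion: P - R is a subnet of the correct net P
  as soon as boxes of links of R lie in R and boxes of the other links avoid R, no node targeted
  by a link of R is a source of a remaining link, and P - R has a unique terminal m-node.
  Correctness of P - R is then inherited: its correction graph is a subgraph of that of P, its
  level-0 boxes are level-0 boxes of P, and the root condition holds in every pre-net because an
  m-node inside a box is touched only by links of the box and by its !-link. The new root is the
  root of P (free weakening, free box), the body of the par-link, or the function of the tensor.\<close>

definition targets :: "('n,'l) hg \<Rightarrow> 'l set \<Rightarrow> 'n set" where
  "targets G S = (\<Union>l\<in>S. set (tgt G l))"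

definition respects_boxes :: "('n,'l) hg \<Rightarrow> 'l set \<Rightarrow> 'l set \<Rightarrow> bool" where
  "respects_boxes G P R =
    (\<forall>h\<in>P. lab G h = Bang \<longrightarrow> (if h \<in> R then ibox G h \<subseteq> R else ibox G h \<inter> R = {}))"

lemma nodes_eq_sources_Un_targets: "nodes G S = sources G S \<union> targets G S"
  unfolding nodes_def sources_def targets_def by blast

lemma targets_Diff: "targets G S - targets G R \<subseteq> targets G (S - R)"
  unfolding targets_def by blast

lemma sources_mono: "A \<subseteq> B \<Longrightarrow> sources G A \<subseteq> sources G B"
  unfolding sources_def by blast

lemma term_m_subset_nodes: "term_m G S \<subseteq> nodes G S"
  unfolding term_m_def terminal_def by blast

lemma fv_subset_nodes: "fv G S \<subseteq> nodes G S"
  unfolding fv_def terminal_def by blast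

lemma link_ok_BangD:
  "link_ok G l \<Longrightarrow> lab G l = Bang \<Longrightarrow>
   src G l = [bang_root G l, bang_enode G l] \<and> tgt G l = [] \<and>
   ntyp G (bang_root G l) = Mty \<and> ntyp G (bang_enode G l) = Ety"
  unfolding link_ok_def bang_root_def bang_enode_def by auto

lemma link_ok_WeakD:
  "link_ok G l \<Longrightarrow> lab G l = Weak \<Longrightarrow>
   src G l = [] \<and> tgt G l = [weak_enode G l] \<and> ntyp G (weak_enode G l) = Ety"
  unfolding link_ok_def weak_enode_def by auto

lemma link_ok_ParE:
  assumes "link_ok G l" "lab G l = Par"
  obtains x b r where "src G l = [x, b]" "tgt G l = [r]"
    "ntyp G x = Ety" "ntyp G b = Mty" "ntyp G r = Mty" "distinct [x, b, r]"
  using assms unfolding link_ok_def by auto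

lemma link_ok_TensE:
  assumes "link_ok G l" "lab G l = Tens"
  obtains f r where "src G l = [f]" "tgt G l = [r, tens_enode G l]"
    "ntyp G f = Mty" "ntyp G r = Mty" "ntyp G (tens_enode G l) = Ety" "distinct [f, r, tens_enode G l]"
  using assms unfolding link_ok_def tens_enode_def by auto

lemma hg_ok_link_ok: "hg_ok G S \<Longrightarrow> l \<in> S \<Longrightarrow> link_ok G l"
  unfolding hg_ok_def by blast

lemma hg_ok_src_unique:
  "hg_ok G S \<Longrightarrow> l1 \<in> S \<Longrightarrow> l2 \<in> S \<Longrightarrow> v \<in> set (src G l1) \<Longrightarrow> v \<in> set (src G l2) \<Longrightarrow> l1 = l2"
  unfolding hg_ok_def by blast

lemma hg_ok_tgt_unique:
  "hg_ok G S \<Longrightarrow> ntyp G v = Mty \<Longrightarrow> l1 \<in> S \<Longrightarrow> l2 \<in> S \<Longrightarrow>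
   v \<in> set (tgt G l1) \<Longrightarrow> v \<in> set (tgt G l2) \<Longrightarrow> l1 = l2"
  unfolding hg_ok_def by blast

lemma hg_ok_nodes_eq_targets: "hg_ok G S \<Longrightarrow> nodes G S = targets G S"
  unfolding hg_ok_def nodes_def targets_def by blast

lemma hg_ok_term_m: "hg_ok G S \<Longrightarrow> term_m G S = {root G S}"
  unfolding hg_ok_def root_def by (metis empty_iff insertCI is_singletonI' is_singleton_the_elem the_equality)

lemma hg_ok_root:
  assumes "hg_ok G S"
  shows "ntyp G (root G S) = Mty" "root G S \<notin> sources G S" "root G S \<in> targets G S"
  using hg_ok_term_m[OF assms] hg_ok_nodes_eq_targets[OF assms]
  unfolding term_m_def terminal_def by auto

lemma prenet_hg_ok: "prenet G S \<Longrightarrow> hg_ok G S"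
  by (erule prenet.cases) simp

lemma prenet_boxes_nested: "prenet G S \<Longrightarrow> boxes_nested G S"
  by (erule prenet.cases) simp

lemma prenet_boxD:
  "prenet G S \<Longrightarrow> h \<in> S \<Longrightarrow> lab G h = Bang \<Longrightarrow>
   ibox G h \<subseteq> S \<and> h \<notin> ibox G h \<and> prenet G (ibox G h) \<and> root G (ibox G h) = bang_root G h \<and>
   (\<forall>w\<in>ibox G h. lab G w = Weak \<longrightarrow> set (tgt G w) \<inter> fv G (ibox G h) = {})"
  by (erule prenet.cases) auto

lemma correct_prenet: "correct G P \<Longrightarrow> prenet G P"
  by (erule correct.cases) simp

lemma correct_acyclic: "correct G P \<Longrightarrow> acyclic (corr_edges G P)"
  by (erule correct.cases) simp

lemma correct_box: "correct G P \<Longrightarrow> level0 G P l \<Longrightarrow> lab G l = Bang \<Longrightarrow> correct G (ibox G l)"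
  by (erule correct.cases) simp

lemma bang_root_in_box_nodes:
  assumes "prenet G S" "h \<in> S" "lab G h = Bang"
  shows "bang_root G h \<in> nodes G (ibox G h)"
proof -
  have "prenet G (ibox G h)" "root G (ibox G h) = bang_root G h"
    using prenet_boxD[OF assms] by auto
  then show ?thesis
    using hg_ok_term_m[OF prenet_hg_ok] term_m_subset_nodes by (metis insert_subset)
qed

text \<open>The only terminal m-node of a box is its root, a source of the !-link.\<close>

lemma box_m_node_links:
  assumes S: "prenet G S" and h: "h \<in> S" "lab G h = Bang"
    and v: "v \<in> nodes G (ibox G h)" "ntyp G v = Mty"
    and k: "k \<in> S" "v \<in> set (src G k) \<union> set (tgt G k)"
  shows "k \<in> insert h (ibox G h)"
proof -
  have hg: "hg_ok G S" using prenet_hg_ok[OF S] .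
  have box: "ibox G h \<subseteq> S" "prenet G (ibox G h)" "root G (ibox G h) = bang_root G h"
    using prenet_boxD[OF S h] by auto
  have hgbox: "hg_ok G (ibox G h)" using prenet_hg_ok[OF box(2)] .
  show ?thesis
  proof (cases "v \<in> set (tgt G k)")
    case True
    obtain t where "t \<in> ibox G h" "v \<in> set (tgt G t)"
      using v(1) hg_ok_nodes_eq_targets[OF hgbox] unfolding targets_def by blast
    then show ?thesis using hg_ok_tgt_unique[OF hg v(2) k(1) _ True] box(1) by blast
  next
    case False
    then have vk: "v \<in> set (src G k)" using k(2) by blast
    show ?thesis
    proof (cases "v \<in> sources G (ibox G h)")
      case True
      then obtain k' where "k' \<in> ibox G h" "v \<in> set (src G k')" unfolding sources_def by blast
      then show ?thesis using hg_ok_src_unique[OF hg k(1) _ vk] box(1) by blast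
    next
      case False
      then have "v \<in> term_m G (ibox G h)" using v unfolding term_m_def terminal_def by blast
      then have "v \<in> set (src G h)"
        using hg_ok_term_m[OF hgbox] box(3) link_ok_BangD[OF hg_ok_link_ok[OF hg h(1)] h(2)] by simp
      then show ?thesis using hg_ok_src_unique[OF hg k(1) h(1) vk] by blast
    qed
  qed
qed

lemma level0_link_not_at_box_m_node:
  assumes "prenet G S" "h \<in> S" "lab G h = Bang" "v \<in> nodes G (ibox G h)" "ntyp G v = Mty"
    "level0 G S k" "lab G k \<noteq> Bang" "v \<in> set (src G k) \<union> set (tgt G k)"
  shows False
  using box_m_node_links[OF assms(1-5) _ assms(8)] assms(2,3,6,7) unfolding level0_def by blast

lemma root_link_level0:
  assumes S: "prenet G S" and t: "t \<in> S" "root G S \<in> set (tgt G t)"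
  shows "level0 G S t" "lab G t \<noteq> Bang"
proof -
  have hg: "hg_ok G S" using prenet_hg_ok[OF S] .
  show "lab G t \<noteq> Bang" using link_ok_BangD[OF hg_ok_link_ok[OF hg t(1)]] t(2) by auto
  have "t \<notin> ibox G h" if h: "h \<in> S" "lab G h = Bang" for h
  proof
    assume th: "t \<in> ibox G h"
    have box: "ibox G h \<subseteq> S" "term_m G (ibox G h) = {bang_root G h}"
      using prenet_boxD[OF S h] hg_ok_term_m[OF prenet_hg_ok, of G "ibox G h"] by simp_all
    have "root G S \<in> nodes G (ibox G h)" using th t(2) unfolding nodes_def by blast
    moreover have "root G S \<notin> sources G (ibox G h)"
      using hg_ok_root(2)[OF hg] sources_mono[OF box(1), of G] by blast
    ultimately have "root G S = bang_root G h"
      using box(2) hg_ok_root(1)[OF hg] unfolding term_m_def terminal_def by blast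
    then have "root G S \<in> sources G S"
      using link_ok_BangD[OF hg_ok_link_ok[OF hg h(1)] h(2)] h(1) unfolding sources_def by force
    then show False using hg_ok_root(2)[OF hg] by blast
  qed
  then show "level0 G S t" using t(1) unfolding level0_def by blast
qed

text \<open>The root condition in the definition of correctness is redundant: every pre-net satisfies it.\<close>

lemma prenet_corr_term_m:
  assumes S: "prenet G S"
  shows "corr_term_m G S = {root G S}"
proof -
  have hg: "hg_ok G S" using prenet_hg_ok[OF S] .
  have bang_e: "ntyp G (bang_enode G l) = Ety" if "l \<in> S" "lab G l = Bang" for l
    using link_ok_BangD[OF hg_ok_link_ok[OF hg that(1)] that(2)] by blast
  have "root G S \<in> corr_term_m G S"
  proof -
    obtain t where t: "t \<in> S" "root G S \<in> set (tgt G t)"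
      using hg_ok_root(3)[OF hg] unfolding targets_def by blast
    have "root G S \<in> corr_nodes G S"
      using root_link_level0[OF S t] t(2) unfolding corr_nodes_def by blast
    moreover have "root G S \<notin> corr_sources G S"
      using hg_ok_root(1,2)[OF hg] bang_e unfolding corr_sources_def sources_def level0_def by force
    ultimately show ?thesis using hg_ok_root(1)[OF hg] unfolding corr_term_m_def by blast
  qed
  moreover have "v = root G S" if v: "v \<in> corr_term_m G S" for v
  proof -
    have vM: "ntyp G v = Mty" and vn: "v \<in> corr_nodes G S" and vs: "v \<notin> corr_sources G S"
      using v unfolding corr_term_m_def by auto
    obtain k where k: "level0 G S k" "lab G k \<noteq> Bang" "v \<in> set (src G k) \<union> set (tgt G k)"
      using vn vM bang_e unfolding corr_nodes_def fv_def level0_def by fastforce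
    have "v \<notin> sources G S"
    proof
      assume "v \<in> sources G S"
      then obtain k' where k': "k' \<in> S" "v \<in> set (src G k')" unfolding sources_def by blast
      consider (bang) "lab G k' = Bang"
        | (boxed) h where "h \<in> S" "lab G h = Bang" "k' \<in> ibox G h"
        | (level0) "level0 G S k'" "lab G k' \<noteq> Bang"
        using k'(1) unfolding level0_def by blast
      then show False
      proof cases
        case bang
        then have "v = bang_root G k'"
          using link_ok_BangD[OF hg_ok_link_ok[OF hg k'(1)]] k'(2) vM by auto
        then show False
          using level0_link_not_at_box_m_node[OF S k'(1) bang _ vM k]
            bang_root_in_box_nodes[OF S k'(1) bang] by blast
      next
        case boxed
        then have "v \<in> nodes G (ibox G h)" using k'(2) unfolding nodes_def by blast
        then show False using level0_link_not_at_box_m_node[OF S boxed(1,2) _ vM k] by blast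
      next
        case level0
        then show False using vs k'(2) unfolding corr_sources_def by blast
      qed
    qed
    moreover have "v \<in> nodes G S" using k unfolding level0_def nodes_def by blast
    ultimately show ?thesis using hg_ok_term_m[OF hg] vM unfolding term_m_def terminal_def by blast
  qed
  ultimately show ?thesis by blast
qed

lemma internal_subset_sources: "internal G S \<subseteq> sources G S"
  unfolding internal_def terminal_def by blast

lemma term_m_Diff:
  assumes hg: "hg_ok G P" and R: "R \<subseteq> P"
  shows "term_m G (P - R) =
    (term_m G P \<inter> targets G (P - R)) \<union> {v \<in> sources G R \<inter> targets G (P - R). ntyp G v = Mty}"
proof -
  have "sources G (P - R) \<inter> sources G R = {}"
    using hg_ok_src_unique[OF hg] R unfolding sources_def by blast
  moreover have "sources G P = sources G (P - R) \<union> sources G R"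
    using R unfolding sources_def by blast
  moreover have "targets G (P - R) \<subseteq> targets G P" unfolding targets_def by blast
  ultimately show ?thesis
    unfolding term_m_def terminal_def nodes_eq_sources_Un_targets by blast
qed

lemma root_notin_targets_Diff:
  assumes "hg_ok G P" "l \<in> P" "l \<in> R" "root G P \<in> set (tgt G l)"
  shows "root G P \<notin> targets G (P - R)"
  using hg_ok_tgt_unique[OF assms(1) hg_ok_root(1)[OF assms(1)] _ assms(2) _ assms(4)] assms(3)
  unfolding targets_def by blast

lemma respects_boxesD:
  assumes "respects_boxes G P R" "h \<in> P" "lab G h = Bang"
  shows "h \<in> R \<Longrightarrow> ibox G h \<subseteq> R" "h \<notin> R \<Longrightarrow> ibox G h \<inter> R = {}"
  using assms unfolding respects_boxes_def by auto

lemma level0_Diff: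
  assumes "respects_boxes G P R" "level0 G (P - R) k"
  shows "level0 G P k"
  using assms respects_boxesD[OF assms(1)] unfolding level0_def by blast

lemma hg_ok_Diff:
  assumes hg: "hg_ok G P"
    and detached: "targets G R \<inter> sources G (P - R) = {}"
    and root: "term_m G (P - R) = {\<rho>}"
  shows "hg_ok G (P - R)"
  unfolding hg_ok_def
proof (intro conjI)
  have "sources G (P - R) \<subseteq> targets G P"
    using hg_ok_nodes_eq_targets[OF hg] nodes_eq_sources_Un_targets[of G P]
      sources_mono[of "P - R" P G] by blast
  then have "sources G (P - R) \<subseteq> targets G (P - R)"
    using detached targets_Diff[of G P R] by blast
  then show "\<forall>v\<in>nodes G (P - R). \<exists>l\<in>P - R. v \<in> set (tgt G l)"
    unfolding nodes_eq_sources_Un_targets targets_def by blast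
  show "finite (P - R)" using hg unfolding hg_ok_def by simp
  show "\<forall>l\<in>P - R. link_ok G l" using hg_ok_link_ok[OF hg] by blast
  show "\<forall>v l1 l2. l1 \<in> P - R \<longrightarrow> l2 \<in> P - R \<longrightarrow> v \<in> set (src G l1) \<longrightarrow> v \<in> set (src G l2) \<longrightarrow> l1 = l2"
    using hg_ok_src_unique[OF hg] by blast
  show "\<forall>v l1 l2. ntyp G v = Mty \<longrightarrow> l1 \<in> P - R \<longrightarrow> l2 \<in> P - R \<longrightarrow>
      v \<in> set (tgt G l1) \<longrightarrow> v \<in> set (tgt G l2) \<longrightarrow> l1 = l2"
    using hg_ok_tgt_unique[OF hg] by blast
  show "\<exists>!v. v \<in> term_m G (P - R)" using root by auto
qed

lemma prenet_Diff:
  assumes P: "prenet G P" and R: "respects_boxes G P R" and hg: "hg_ok G (P - R)"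
  shows "prenet G (P - R)"
proof (rule prenet.intros[OF hg])
  show "boxes_nested G (P - R)"
    using prenet_boxes_nested[OF P] unfolding boxes_nested_def by blast
  show "\<forall>l\<in>P - R. lab G l = Bang \<longrightarrow> ibox G l \<subseteq> P - R \<and> l \<notin> ibox G l \<and> prenet G (ibox G l) \<and>
      root G (ibox G l) = bang_root G l \<and>
      (\<forall>w\<in>ibox G l. lab G w = Weak \<longrightarrow> set (tgt G w) \<inter> fv G (ibox G l) = {})"
    using prenet_boxD[OF P] respects_boxesD(2)[OF R] by blast
qed

lemma correct_Diff:
  assumes P: "correct G P" and R: "respects_boxes G P R" and Q: "prenet G (P - R)"
  shows "correct G (P - R)"
proof (rule correct.intros[OF Q prenet_corr_term_m[OF Q]])
  have "corr_edges G (P - R) \<subseteq> corr_edges G P"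
    using level0_Diff[OF R] unfolding corr_edges_def by blast
  then show "acyclic (corr_edges G (P - R))"
    using correct_acyclic[OF P] acyclic_subset by blast
  show "\<forall>l. level0 G (P - R) l \<and> lab G l = Bang \<longrightarrow> correct G (ibox G l)"
    using correct_box[OF P] level0_Diff[OF R] by blast
qed

lemma subnet_Diff:
  assumes P: "correct G P" and R: "R \<subseteq> P" "respects_boxes G P R"
    and detached: "targets G R \<inter> sources G (P - R) = {}"
    and root: "term_m G (P - R) = {\<rho>}"
  shows "subnet G (P - R) P"
proof -
  have pP: "prenet G P" using correct_prenet[OF P] .
  have "prenet G (P - R)"
    using prenet_Diff[OF pP R(2) hg_ok_Diff[OF prenet_hg_ok[OF pP] detached root]] .
  then have "correct G (P - R)" by (rule correct_Diff[OF P R(2)])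
  moreover have box_closed: "ibox G h \<subseteq> P - R" if "h \<in> P - R" "lab G h = Bang" for h
    using prenet_boxD[OF pP] respects_boxesD(2)[OF R(2)] that by blast
  moreover have "l \<in> P - R" if "l \<in> P" "v \<in> set (tgt G l)" "v \<in> internal G (P - R)" for l v
    using that detached internal_subset_sources[of G "P - R"] unfolding targets_def by blast
  moreover have "ibox G l \<subseteq> P - R"
    if l: "l \<in> P" "lab G l = Bang" and v: "v \<in> fv G (ibox G l)" "v \<in> internal G (P - R)" for l v
  proof (rule ccontr)
    assume "\<not> ibox G l \<subseteq> P - R"
    then have "ibox G l \<subseteq> R" using box_closed l respects_boxesD(1)[OF R(2) l] by blast
    have "prenet G (ibox G l)" using prenet_boxD[OF pP l] by blast
    then have "nodes G (ibox G l) = targets G (ibox G l)"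
      by (intro hg_ok_nodes_eq_targets prenet_hg_ok)
    moreover have "v \<in> nodes G (ibox G l)" using v(1) fv_subset_nodes by fast
    ultimately have "v \<in> targets G R" using \<open>ibox G l \<subseteq> R\<close> unfolding targets_def by auto
    then show False using v(2) detached internal_subset_sources[of G "P - R"] by blast
  qed
  ultimately show ?thesis unfolding subnet_def by blast
qed

lemma respects_boxes_level0:
  "level0 G P l \<Longrightarrow> lab G l \<noteq> Bang \<Longrightarrow> respects_boxes G P {l}"
  unfolding respects_boxes_def level0_def by auto

lemma respects_boxes_Un:
  "respects_boxes G P R1 \<Longrightarrow> respects_boxes G P R2 \<Longrightarrow> respects_boxes G P (R1 \<union> R2)"
  unfolding respects_boxes_def by (auto split: if_splits)

lemma free_bangD:
  assumes "prenet G P" "free_bang G P h"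
  shows "h \<in> P" "lab G h = Bang" "level0 G P h" "ibox G h \<subseteq> P" "fv G (ibox G h) \<subseteq> fv G P"
  using assms prenet_boxD[of G P h] unfolding free_bang_def level0_def by auto

lemma respects_boxes_free_box:
  assumes P: "prenet G P" and h: "free_bang G P h"
  shows "respects_boxes G P (insert h (ibox G h))"
  unfolding respects_boxes_def
proof (intro ballI impI)
  fix h' assume h': "h' \<in> P" "lab G h' = Bang"
  note F = free_bangD[OF P h]
  have nested: "boxes_nested G P" using prenet_boxes_nested[OF P] .
  show "if h' \<in> insert h (ibox G h) then ibox G h' \<subseteq> insert h (ibox G h)
        else ibox G h' \<inter> insert h (ibox G h) = {}"
  proof (cases "h' \<in> insert h (ibox G h)")
    case True
    then have "h' = h \<or> ibox G h' \<subseteq> ibox G h"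
      using nested F(1,2) h' unfolding boxes_nested_def by blast
    then show ?thesis using True by auto
  next
    case False
    have "h \<notin> ibox G h'" using F(3) h' unfolding level0_def by blast
    moreover have "ibox G h \<inter> ibox G h' = {}"
      using nested F(1,2) h' False \<open>h \<notin> ibox G h'\<close> unfolding boxes_nested_def by blast
    ultimately show ?thesis using False by auto
  qed
qed

text \<open>A free variable of a free box is a free variable of the whole net, hence the source of no link.\<close>

lemma free_box_node_links:
  assumes P: "prenet G P" and h: "free_bang G P h"
    and v: "v \<in> nodes G (ibox G h)" and k: "k \<in> P" "v \<in> set (src G k)"
  shows "k \<in> insert h (ibox G h)"
proof (cases "v \<in> sources G (ibox G h)")
  case True
  then obtain k' where "k' \<in> ibox G h" "v \<in> set (src G k')" unfolding sources_def by blast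
  then show ?thesis
    using hg_ok_src_unique[OF prenet_hg_ok[OF P] k(1) _ k(2)] free_bangD(4)[OF P h] by blast
next
  case False
  show ?thesis
  proof (cases "ntyp G v")
    case Mty
    then show ?thesis using box_m_node_links[OF P free_bangD(1,2)[OF P h] v Mty k(1)] k(2) by blast
  next
    case Ety
    then have "v \<in> fv G P"
      using v False free_bangD(5)[OF P h] unfolding fv_def terminal_def by blast
    moreover have "v \<in> sources G P" using k unfolding sources_def by blast
    ultimately show ?thesis unfolding fv_def terminal_def by blast
  qed
qed

lemma free_box_detached:
  assumes P: "prenet G P" and h: "free_bang G P h"
  shows "targets G (insert h (ibox G h)) \<inter> sources G (P - insert h (ibox G h)) = {}"
proof -
  have "tgt G h = []"
    using link_ok_BangD[OF hg_ok_link_ok[OF prenet_hg_ok[OF P]]] free_bangD(1,2)[OF P h] by blast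
  then have "targets G (insert h (ibox G h)) \<subseteq> nodes G (ibox G h)"
    unfolding targets_def nodes_def by auto
  then show ?thesis using free_box_node_links[OF P h] unfolding sources_def by blast
qed

lemma box_m_source_not_targeted_outside:
  assumes P: "prenet G P" and h: "h \<in> P" "lab G h = Bang"
    and v: "v \<in> sources G (insert h (ibox G h))" "ntyp G v = Mty"
  shows "v \<notin> targets G (P - insert h (ibox G h))"
proof -
  have shape: "src G h = [bang_root G h, bang_enode G h]" "tgt G h = []"
    "ntyp G (bang_enode G h) = Ety"
    using link_ok_BangD[OF hg_ok_link_ok[OF prenet_hg_ok[OF P] h(1)] h(2)] by auto
  have "v \<in> nodes G (ibox G h)"
    using v shape bang_root_in_box_nodes[OF P h] unfolding sources_def nodes_def by auto
  then show ?thesis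
    using box_m_node_links[OF P h _ v(2)] unfolding targets_def by blast
qed

lemma subnet_remove_free_weakening:
  assumes P: "correct G P" and l: "free_weakening G P l"
  shows "subnet G (P - {l}) P"
proof -
  have pP: "prenet G P" using correct_prenet[OF P] .
  have hg: "hg_ok G P" using prenet_hg_ok[OF pP] .
  define x where "x = weak_enode G l"
  have lP: "l \<in> P" "lab G l = Weak" and "x \<in> fv G P"
    using l unfolding free_weakening_def x_def by auto
  then have x: "x \<notin> sources G P" "ntyp G x = Ety" unfolding fv_def terminal_def by auto
  have tgt_l: "src G l = []" "tgt G l = [x]"
    using link_ok_WeakD[OF hg_ok_link_ok[OF hg lP(1)] lP(2)] unfolding x_def by auto
  have "l \<notin> ibox G h" if h: "h \<in> P" "lab G h = Bang" for h
  proof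
    assume lh: "l \<in> ibox G h"
    have box: "ibox G h \<subseteq> P" "set (tgt G l) \<inter> fv G (ibox G h) = {}"
      using prenet_boxD[OF pP h] lh lP(2) by auto
    have "x \<in> nodes G (ibox G h)" using lh tgt_l unfolding nodes_def by force
    moreover have "x \<notin> sources G (ibox G h)" using x(1) sources_mono[OF box(1), of G] by blast
    ultimately have "x \<in> fv G (ibox G h)" using x(2) unfolding fv_def terminal_def by blast
    then show False using box(2) tgt_l by simp
  qed
  then have boxes: "respects_boxes G P {l}"
    using respects_boxes_level0[of G P l] lP unfolding level0_def by simp
  have detached: "targets G {l} \<inter> sources G (P - {l}) = {}"
    using x(1) sources_mono[of "P - {l}" P G] tgt_l unfolding targets_def by auto
  have "root G P \<notin> targets G {l}"
    using tgt_l x(2) hg_ok_root(1)[OF hg] unfolding targets_def by auto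
  then have "root G P \<in> targets G (P - {l})"
    using hg_ok_root(3)[OF hg] targets_Diff[of G P "{l}"] by blast
  moreover have "sources G {l} = {}" using tgt_l unfolding sources_def by simp
  ultimately have root: "term_m G (P - {l}) = {root G P}"
    using term_m_Diff[OF hg, of "{l}"] hg_ok_term_m[OF hg] lP(1) by simp
  show ?thesis using subnet_Diff[OF P _ boxes detached root] lP(1) by simp
qed

lemma subnet_remove_root_par:
  assumes P: "correct G P" and l: "root_link G P l" "lab G l = Par"
  shows "subnet G (P - {l}) P"
proof -
  have pP: "prenet G P" using correct_prenet[OF P] .
  have hg: "hg_ok G P" using prenet_hg_ok[OF pP] .
  have lP: "l \<in> P" and root: "root G P \<in> set (tgt G l)"
    using l(1) unfolding root_link_def by auto
  obtain x b r where shape: "src G l = [x, b]" "tgt G l = [r]"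
    "ntyp G x = Ety" "ntyp G b = Mty" "distinct [x, b, r]"
    using link_ok_ParE[OF hg_ok_link_ok[OF hg lP] l(2)] by metis
  have r: "r = root G P" using root shape(2) by simp
  have boxes: "respects_boxes G P {l}"
    using root_link_level0[OF pP lP root] by (rule respects_boxes_level0)
  have detached: "targets G {l} \<inter> sources G (P - {l}) = {}"
    using hg_ok_root(2)[OF hg] sources_mono[of "P - {l}" P G] shape(2) r
    unfolding targets_def by auto
  have "root G P \<notin> targets G (P - {l})"
    using root_notin_targets_Diff[OF hg lP _ root] by blast
  moreover have "b \<in> targets G (P - {l})"
  proof -
    have "b \<in> nodes G P" using lP shape(1) unfolding nodes_def by force
    then have "b \<in> targets G P" using hg_ok_nodes_eq_targets[OF hg] by simp
    moreover have "b \<notin> targets G {l}" using shape(2,5) unfolding targets_def by auto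
    ultimately show ?thesis using targets_Diff[of G P "{l}"] by blast
  qed
  moreover have "sources G {l} = {x, b}" using shape(1) unfolding sources_def by auto
  ultimately have root: "term_m G (P - {l}) = {b}"
    using term_m_Diff[OF hg, of "{l}"] hg_ok_term_m[OF hg] lP shape(3,4) by auto
  show ?thesis using subnet_Diff[OF P _ boxes detached root] lP by simp
qed

lemma subnet_remove_free_box:
  assumes P: "correct G P" and l: "free_bang G P l"
  shows "subnet G (P - insert l (ibox G l)) P"
proof -
  have pP: "prenet G P" using correct_prenet[OF P] .
  have hg: "hg_ok G P" using prenet_hg_ok[OF pP] .
  note F = free_bangD[OF pP l]
  define B where "B = insert l (ibox G l)"
  obtain t where t: "t \<in> P" "root G P \<in> set (tgt G t)"
    using hg_ok_root(3)[OF hg] unfolding targets_def by blast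
  then have "t \<notin> B"
    using root_link_level0[OF pP t] F(1,2) unfolding B_def level0_def by auto
  then have "root G P \<in> targets G (P - B)" using t unfolding targets_def by blast
  moreover have "v \<notin> targets G (P - B)" if "v \<in> sources G B" "ntyp G v = Mty" for v
    using box_m_source_not_targeted_outside[OF pP F(1,2)] that unfolding B_def by blast
  ultimately have root: "term_m G (P - B) = {root G P}"
    using term_m_Diff[OF hg, of B] hg_ok_term_m[OF hg] F(1,4) unfolding B_def by auto
  show ?thesis
    using subnet_Diff[OF P _ respects_boxes_free_box[OF pP l] free_box_detached[OF pP l]] root F(1,4)
    unfolding B_def by simp
qed

lemma subnet_remove_root_tensor_free_argument:
  assumes P: "correct G P" and l: "root_link G P l" "lab G l = Tens"
    and h: "free_bang G P h" "bang_enode G h = tens_enode G l"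
  shows "subnet G (P - insert l (insert h (ibox G h))) P"
proof -
  have pP: "prenet G P" using correct_prenet[OF P] .
  have hg: "hg_ok G P" using prenet_hg_ok[OF pP] .
  note F = free_bangD[OF pP h(1)]
  define B where "B = insert h (ibox G h)"
  have lP: "l \<in> P" and root: "root G P \<in> set (tgt G l)"
    using l(1) unfolding root_link_def by auto
  obtain f r where shape: "src G l = [f]" "tgt G l = [r, bang_enode G h]"
    "ntyp G f = Mty" "ntyp G (bang_enode G h) = Ety" "distinct [f, r, bang_enode G h]"
    using link_ok_TensE[OF hg_ok_link_ok[OF hg lP] l(2)] h(2) by metis
  have r: "r = root G P" using root shape(2,4) hg_ok_root(1)[OF hg] by auto
  have h_shape: "bang_enode G h \<in> set (src G h)" "tgt G h = []"
    using link_ok_BangD[OF hg_ok_link_ok[OF hg F(1)] F(2)] by auto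
  have lev: "level0 G P l" "lab G l \<noteq> Bang" using root_link_level0[OF pP lP root] by auto
  then have lB: "l \<notin> B" using F(1,2) unfolding B_def level0_def by auto
  have BP: "insert l B \<subseteq> P" using lP F(1,4) unfolding B_def by auto
  have boxes: "respects_boxes G P (insert l B)"
    using respects_boxes_Un[OF respects_boxes_level0[OF lev] respects_boxes_free_box[OF pP h(1)]]
    unfolding B_def by (simp add: insert_commute)
  have detached: "targets G (insert l B) \<inter> sources G (P - insert l B) = {}"
  proof -
    have "root G P \<notin> sources G (P - insert l B)"
      using hg_ok_root(2)[OF hg] sources_mono[of "P - insert l B" P G] by blast
    moreover have "bang_enode G h \<notin> sources G (P - insert l B)"
      using hg_ok_src_unique[OF hg _ F(1) _ h_shape(1)] unfolding B_def sources_def by blast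
    moreover have "targets G B \<inter> sources G (P - insert l B) = {}"
      using free_box_detached[OF pP h(1)] sources_mono[of "P - insert l B" "P - B" G]
      unfolding B_def by blast
    ultimately show ?thesis using shape(2) r unfolding targets_def by auto
  qed
  have "f \<in> targets G (P - insert l B)"
  proof -
    have "f \<in> nodes G P" using lP shape(1) unfolding nodes_def by force
    then obtain t where t: "t \<in> P" "f \<in> set (tgt G t)"
      using hg_ok_nodes_eq_targets[OF hg] unfolding targets_def by blast
    have "f \<notin> nodes G (ibox G h)"
      using level0_link_not_at_box_m_node[OF pP F(1,2) _ shape(3) lev] shape(1) by auto
    then have "t \<notin> insert l B"
      using t(2) shape(2,5) h_shape(2) unfolding B_def nodes_def by auto
    then show ?thesis using t unfolding targets_def by blast
  qed
  moreover have "root G P \<notin> targets G (P - insert l B)"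
    using root_notin_targets_Diff[OF hg lP _ root] by blast
  moreover have "v \<notin> targets G (P - insert l B)" if "v \<in> sources G B" "ntyp G v = Mty" for v
    using box_m_source_not_targeted_outside[OF pP F(1,2)] that unfolding B_def targets_def by blast
  moreover have "sources G (insert l B) = insert f (sources G B)"
    using shape(1) unfolding sources_def by auto
  ultimately have "term_m G (P - insert l B) = {f}"
    using term_m_Diff[OF hg BP] hg_ok_term_m[OF hg] shape(3) by auto
  then show ?thesis using subnet_Diff[OF P BP boxes detached] unfolding B_def by blast
qed

theorem lemma2:
  fixes G :: "('n, 'l) hg" and P :: "'l set"
  assumes "correct G P"
  shows "(\<forall>l. free_weakening G P l \<longrightarrow> subnet G (P - {l}) P)
       \<and> (\<forall>l. root_link G P l \<and> lab G l = Par \<longrightarrow> subnet G (P - {l}) P)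
       \<and> (\<forall>l. free_bang G P l \<and> is_substitution G P l \<longrightarrow> subnet G (P - ({l} \<union> ibox G l)) P)
       \<and> (\<forall>l h. root_link G P l \<and> lab G l = Tens \<and> h \<in> P \<and> free_bang G P h
                \<and> bang_enode G h = tens_enode G l
                \<longrightarrow> subnet G (P - ({l, h} \<union> ibox G h)) P)"
proof -
  note subnet_remove_free_box[OF assms]
  then show ?thesis
    using subnet_remove_free_weakening[OF assms] subnet_remove_root_par[OF assms]
      subnet_remove_root_tensor_free_argument[OF assms]
    by simp
qed

end
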